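(* Let $f$ be a function of unitation on $\{0,1\}^n$ and let $\sigma=1$, $\kappa\in\mathbb{N}$ and $\mu\geq (n+1)\cdot\kappa$. Then the expected optimisation time of the $(\mu+1)$ EA with phenotypic clearing with clearing radius $\sigma$, niche capacity $\kappa$ and population size $\mu$ on $f$ is $O(\mu n\log n)$.
   Context: A function of unitation is $f:\{0,1\}^n\to\mathbb{R}$ with $f(x)=u(|x|_1)$ for some $u:\{0,\dots,n\}\to\mathbb{R}^+$, where $|x|_1$ is the number of 1-bits of $x$; fitness values are assumed positive. The optimisation time is the number of generations until a global maximum of $f$ is found. The $(\mu+1)$ EA with clearing (population size $\mu$, clearing radius $\sigma$, niche capacity $\kappa$, distance function $\mathrm{d}$): $P_0$ consists of $\mu$ bit strings chosen independently and uniformly at random. In generation $t$: choose a parent $x\in P_t$ uniformly at random; create $y$ by flipping each bit of $x$ independently with probability $1/n$; let $P_t^*=P_t\cup\{y\}$; update the fitness values of $P_t^*$ by the clearing procedure: sort $P_t^*$ by decreasing fitness; for $i=1,\dots,|P_t^*|$, if the current fitness of $P[i]$ is positive, set $w:=1$ and for $j=i+1,\dots,|P_t^*|$: if the current fitness of $P[j]$ is positive and $\mathrm{d}(P[i],P[j])<\sigma$ then, if $w<\kappa$ set $w:=w+1$, else set the fitness of $P[j]$ to $0$. Individuals whose fitness is not reset are winners, the others are cleared. Then choose $z\in P_t$ with worst (cleared) fitness uniformly at random; if the (cleared) fitness of $y$ is at least that of $z$, set $P_{t+1}=P_t^*\setminus\{z\}$, otherwise $P_{t+1}=P_t^*\setminus\{y\}$.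 Phenotypic clearing uses $\mathrm{d}(x,y)=\big||x|_1-|y|_1\big|$. *)

theory Defs
  imports "HOL-Probability.Probability"
begin

text \<open>Bit strings are boolean lists of length n; a population is a list of bit strings.\<close>

definition unitation :: "bool list \<Rightarrow> nat" where
  "unitation x = length (filter id x)"

definition pheno_dist :: "bool list \<Rightarrow> bool list \<Rightarrow> nat" where
  "pheno_dist x y = nat \<bar>int (unitation x) - int (unitation y)\<bar>"

text \<open>Inner loop of the clearing procedure (winner at index i, remaining sorted indices js,
  counter w, current fitness values fit indexed by position in the population list).\<close>
fun clear_inner :: "(bool list \<Rightarrow> bool list \<Rightarrow> nat) \<Rightarrow> nat \<Rightarrow> nat \<Rightarrow> (nat \<Rightarrow> bool list)
    \<Rightarrow> nat \<Rightarrow> nat list \<Rightarrow> nat \<Rightarrow> (nat \<Rightarrow> real) \<Rightarrow> (nat \<Rightarrow> real)" where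
  "clear_inner d \<sigma> \<kappa> X i [] w fit = fit"
| "clear_inner d \<sigma> \<kappa> X i (j # js) w fit =
     (if fit j > 0 \<and> d (X i) (X j) < \<sigma> then
        (if w < \<kappa> then clear_inner d \<sigma> \<kappa> X i js (w + 1) fit
         else clear_inner d \<sigma> \<kappa> X i js w (fit(j := 0)))
      else clear_inner d \<sigma> \<kappa> X i js w fit)"

fun clear_outer :: "(bool list \<Rightarrow> bool list \<Rightarrow> nat) \<Rightarrow> nat \<Rightarrow> nat \<Rightarrow> (nat \<Rightarrow> bool list)
    \<Rightarrow> nat list \<Rightarrow> (nat \<Rightarrow> real) \<Rightarrow> (nat \<Rightarrow> real)" where
  "clear_outer d \<sigma> \<kappa> X [] fit = fit"
| "clear_outer d \<sigma> \<kappa> X (i # is) fit =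
     clear_outer d \<sigma> \<kappa> X is (if fit i > 0 then clear_inner d \<sigma> \<kappa> X i is 1 fit else fit)"

text \<open>Cleared fitness of each position of the list Ps: sort positions by decreasing fitness
  (stable sort, ties broken by position) and run the clearing procedure.\<close>
definition clearing :: "(bool list \<Rightarrow> bool list \<Rightarrow> nat) \<Rightarrow> nat \<Rightarrow> nat \<Rightarrow> (bool list \<Rightarrow> real)
    \<Rightarrow> bool list list \<Rightarrow> nat \<Rightarrow> real" where
  "clearing d \<sigma> \<kappa> f Ps =
     clear_outer d \<sigma> \<kappa> (\<lambda>i. Ps ! i) (sort_key (\<lambda>i. - f (Ps ! i)) [0..<length Ps]) (\<lambda>i. f (Ps ! i))"

fun mutate :: "nat \<Rightarrow> bool list \<Rightarrow> bool list pmf" where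
  "mutate n [] = return_pmf []"
| "mutate n (b # bs) =
     bind_pmf (bernoulli_pmf (1 / real n)) (\<lambda>c.
     bind_pmf (mutate n bs) (\<lambda>r. return_pmf ((b \<noteq> c) # r)))"

definition ea_step :: "(bool list \<Rightarrow> bool list \<Rightarrow> nat) \<Rightarrow> nat \<Rightarrow> nat \<Rightarrow> nat \<Rightarrow> nat
    \<Rightarrow> (bool list \<Rightarrow> real) \<Rightarrow> bool list list \<Rightarrow> bool list list pmf" where
  "ea_step d \<sigma> \<kappa> \<mu> n f P =
     bind_pmf (pmf_of_set {..<\<mu>}) (\<lambda>i.
     bind_pmf (mutate n (P ! i)) (\<lambda>y.
       let Ps = P @ [y];
           c = clearing d \<sigma> \<kappa> f Ps;
           m = Min (c ` {..<\<mu>})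
       in map_pmf (\<lambda>z. if c z \<le> c \<mu> then take z Ps @ drop (Suc z) Ps else P)
                  (pmf_of_set {z. z < \<mu> \<and> c z = m})))"

definition ea_init :: "nat \<Rightarrow> nat \<Rightarrow> bool list list pmf" where
  "ea_init \<mu> n = pmf_of_set {P. length P = \<mu> \<and> (\<forall>x\<in>set P. length x = n)}"

fun ea_path :: "(bool list \<Rightarrow> bool list \<Rightarrow> nat) \<Rightarrow> nat \<Rightarrow> nat \<Rightarrow> nat \<Rightarrow> nat
    \<Rightarrow> (bool list \<Rightarrow> real) \<Rightarrow> nat \<Rightarrow> bool list list list pmf" where
  "ea_path d \<sigma> \<kappa> \<mu> n f 0 = map_pmf (\<lambda>P. [P]) (ea_init \<mu> n)"
| "ea_path d \<sigma> \<kappa> \<mu> n f (Suc t) =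
     bind_pmf (ea_path d \<sigma> \<kappa> \<mu> n f t) (\<lambda>ps.
       map_pmf (\<lambda>P. ps @ [P]) (ea_step d \<sigma> \<kappa> \<mu> n f (last ps)))"

definition optimal :: "nat \<Rightarrow> (nat \<Rightarrow> real) \<Rightarrow> bool list \<Rightarrow> bool" where
  "optimal n u x \<longleftrightarrow> u (unitation x) = Max (u ` {0..n})"

text \<open>Expected optimisation time T (number of generations until an optimum is in the
  population), via E[T] = sum over t of Pr[T > t], where T > t iff none of P_0..P_t
  contains a global optimum.\<close>
definition expected_opt_time :: "(bool list \<Rightarrow> bool list \<Rightarrow> nat) \<Rightarrow> nat \<Rightarrow> nat \<Rightarrow> nat \<Rightarrow> nat
    \<Rightarrow> (nat \<Rightarrow> real) \<Rightarrow> ennreal" where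
  "expected_opt_time d \<sigma> \<kappa> \<mu> n u =
     (\<Sum>t. ennreal (measure_pmf.prob (ea_path d \<sigma> \<kappa> \<mu> n (\<lambda>x. u (unitation x)) t)
                      {ps. \<forall>P\<in>set ps. \<forall>x\<in>set P. \<not> optimal n u x}))"

end

theory Submission
  imports Defs "HOL-Analysis.Harmonic_Numbers"
begin

text \<open>Let k be an optimal unitation level. As long as k is not occupied, the population uses at
  most n levels, each holding at most \<kappa> winners of the clearing, so with \<mu> \<ge> (n + 1) \<kappa> some
  old individual is cleared. Then the offspring is always accepted and the removed individual is
  a cleared one, whose level is shared by a survivor: occupied levels are never lost. Hence the
  distance g of the population to level k never increases, and it decreases if the closest
  individual is selected (probability 1/\<mu>) and one of its g bits pointing towards k is flipped
  alone (probability at least g/(e n)). The potential e n \<mu> H_g thus drops by 1 in expectation in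
  every generation, and additive drift bounds the expected optimisation time by e n \<mu> H_n.\<close>

section \<open>Clearing\<close>

lemma clear_inner_notin: "j \<notin> set js \<Longrightarrow> clear_inner d \<sigma> \<kappa> X i js w fit j = fit j"
  by (induction js arbitrary: w fit) auto

lemma clear_inner_cleared:
  "clear_inner d \<sigma> \<kappa> X i js w fit j = fit j \<or>
     (clear_inner d \<sigma> \<kappa> X i js w fit j = 0 \<and> j \<in> set js \<and> d (X i) (X j) < \<sigma>)"
proof (induction js arbitrary: w fit)
  case (Cons a js)
  show ?case
  proof (cases "fit a > 0 \<and> d (X i) (X a) < \<sigma> \<and> \<not> w < \<kappa>")
    case True
    define g where "g = fit(a := 0)"
    have "clear_inner d \<sigma> \<kappa> X i (a # js) w fit = clear_inner d \<sigma> \<kappa> X i js w g"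
      using True by (simp add: g_def)
    moreover have "g j = (if j = a then 0 else fit j)" by (simp add: g_def)
    ultimately show ?thesis using Cons.IH[of w g] True by (cases "j = a") auto
  next
    case False
    then show ?thesis using Cons.IH[of _ fit] by (auto split: if_splits)
  qed
qed simp

lemma clear_inner_winners_card:
  assumes "distinct js" "w \<le> \<kappa>"
  shows "card {j \<in> set js. d (X i) (X j) < \<sigma> \<and> clear_inner d \<sigma> \<kappa> X i js w fit j > 0} + w \<le> \<kappa>"
  using assms
proof (induction js arbitrary: w fit)
  case (Cons a js)
  let ?W = "\<lambda>w fit. {j \<in> set js. d (X i) (X j) < \<sigma> \<and> clear_inner d \<sigma> \<kappa> X i js w fit j > 0}"
  have js: "distinct js" "a \<notin> set js" using Cons.prems by auto
  show ?case
  proof (cases "fit a > 0 \<and> d (X i) (X a) < \<sigma>")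
    case close: True
    show ?thesis
    proof (cases "w < \<kappa>")
      case True
      then have "{j \<in> set (a # js). d (X i) (X j) < \<sigma> \<and> clear_inner d \<sigma> \<kappa> X i (a # js) w fit j > 0}
          = insert a (?W (w + 1) fit)"
        using close by (auto simp: clear_inner_notin[OF js(2)])
      then show ?thesis using Cons.IH[OF js(1), of "w + 1" fit] True js(2) by simp
    next
      case False
      then have "{j \<in> set (a # js). d (X i) (X j) < \<sigma> \<and> clear_inner d \<sigma> \<kappa> X i (a # js) w fit j > 0}
          = ?W w (fit(a := 0))"
        using close by (auto simp: clear_inner_notin[OF js(2)])
      then show ?thesis using Cons.IH[OF js(1) Cons.prems(2)] by simp
    qed
  next
    case False
    then have "{j \<in> set (a # js). d (X i) (X j) < \<sigma> \<and> clear_inner d \<sigma> \<kappa> X i (a # js) w fit j > 0}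
        = ?W w fit"
      by (auto simp: clear_inner_notin[OF js(2)])
    then show ?thesis using Cons.IH[OF js(1) Cons.prems(2)] by simp
  qed
qed simp

lemma clear_outer_notin: "j \<notin> set xs \<Longrightarrow> clear_outer d \<sigma> \<kappa> X xs fit j = fit j"
  by (induction xs arbitrary: fit) (auto simp: clear_inner_notin)

lemma clear_outer_cleared:
  "distinct xs \<Longrightarrow> clear_outer d \<sigma> \<kappa> X xs fit j = fit j \<or>
     (clear_outer d \<sigma> \<kappa> X xs fit j = 0 \<and> (\<exists>i \<in> set xs. i \<noteq> j \<and> d (X i) (X j) < \<sigma>))"
proof (induction xs arbitrary: fit)
  case (Cons a xs)
  define fit' where "fit' = (if fit a > 0 then clear_inner d \<sigma> \<kappa> X a xs 1 fit else fit)"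
  have "fit' j = fit j \<or> (fit' j = 0 \<and> (\<exists>i \<in> set (a # xs). i \<noteq> j \<and> d (X i) (X j) < \<sigma>))"
    using clear_inner_cleared[of d \<sigma> \<kappa> X a xs 1 fit j] Cons.prems by (auto simp: fit'_def)
  moreover have "clear_outer d \<sigma> \<kappa> X (a # xs) fit j = clear_outer d \<sigma> \<kappa> X xs fit' j"
    by (simp add: fit'_def)
  ultimately show ?case using Cons.IH[of fit'] Cons.prems by auto
qed simp

text \<open>The first winner of a level, in processing order, admits at most \<kappa> - 1 more of its level.\<close>
lemma clear_outer_niche_card:
  assumes "distinct xs" "1 \<le> \<kappa>" and close_iff: "\<And>a b. d (X a) (X b) < \<sigma> \<longleftrightarrow> L a = L b"
  shows "card {j \<in> set xs. L j = l \<and> clear_outer d \<sigma> \<kappa> X xs fit j > 0} \<le> \<kappa>"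
  using assms(1)
proof (induction xs arbitrary: fit)
  case (Cons a xs)
  have xs: "distinct xs" "a \<notin> set xs" using Cons.prems by auto
  define fit' where "fit' = (if fit a > 0 then clear_inner d \<sigma> \<kappa> X a xs 1 fit else fit)"
  let ?r = "clear_outer d \<sigma> \<kappa> X xs fit'"
  have step: "clear_outer d \<sigma> \<kappa> X (a # xs) fit = ?r" by (simp add: fit'_def)
  have ra: "?r a = fit a"
    by (simp add: clear_outer_notin[OF xs(2)] clear_inner_notin[OF xs(2)] fit'_def)
  show ?case
  proof (cases "fit a > 0 \<and> L a = l")
    case True
    let ?S = "{j \<in> set xs. L j = l \<and> ?r j > 0}"
    have "fit' j > 0" if "?r j > 0" for j
      using clear_outer_cleared[OF xs(1), of d \<sigma> \<kappa> X fit' j] that by auto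
    then have "?S \<subseteq> {j \<in> set xs. d (X a) (X j) < \<sigma> \<and> clear_inner d \<sigma> \<kappa> X a xs 1 fit j > 0}"
      using True close_iff[of a] by (auto simp: fit'_def)
    then have "card ?S \<le> card {j \<in> set xs. d (X a) (X j) < \<sigma> \<and> clear_inner d \<sigma> \<kappa> X a xs 1 fit j > 0}"
      by (intro card_mono) auto
    then have "card ?S + 1 \<le> \<kappa>"
      using clear_inner_winners_card[OF xs(1) assms(2), of d X a \<sigma> fit] by linarith
    moreover have "card {j \<in> set (a # xs). L j = l \<and> ?r j > 0} \<le> card (insert a ?S)"
      by (intro card_mono) auto
    moreover have "card (insert a ?S) \<le> card ?S + 1"
      by (simp add: card_insert_if)
    ultimately show ?thesis unfolding step by linarith
  next
    case False
    then have "{j \<in> set (a # xs). L j = l \<and> ?r j > 0} = {j \<in> set xs. L j = l \<and> ?r j > 0}"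
      using ra by auto
    then show ?thesis using step Cons.IH[OF xs(1)] by simp
  qed
qed simp

lemma clearing_cleared:
  "clearing d \<sigma> \<kappa> f Ps j = f (Ps ! j) \<or>
     (clearing d \<sigma> \<kappa> f Ps j = 0 \<and> (\<exists>i < length Ps. i \<noteq> j \<and> d (Ps ! i) (Ps ! j) < \<sigma>))"
  unfolding clearing_def
  using clear_outer_cleared[of "sort_key (\<lambda>i. - f (Ps ! i)) [0..<length Ps]" d \<sigma> \<kappa> "(!) Ps"
      "\<lambda>i. f (Ps ! i)" j]
  by auto

lemma clearing_niche_card:
  assumes "1 \<le> \<kappa>" and close_iff: "\<And>x y. d x y < \<sigma> \<longleftrightarrow> L x = L y"
  shows "card {j. j < length Ps \<and> L (Ps ! j) = l \<and> clearing d \<sigma> \<kappa> f Ps j > 0} \<le> \<kappa>"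
proof -
  let ?xs = "sort_key (\<lambda>i. - f (Ps ! i)) [0..<length Ps]"
  have "{j. j < length Ps \<and> L (Ps ! j) = l \<and> clearing d \<sigma> \<kappa> f Ps j > 0}
      = {j \<in> set ?xs. L (Ps ! j) = l \<and> clear_outer d \<sigma> \<kappa> ((!) Ps) ?xs (\<lambda>i. f (Ps ! i)) j > 0}"
    unfolding clearing_def by auto
  then show ?thesis
    using clear_outer_niche_card[of ?xs \<kappa> d "(!) Ps" \<sigma> "\<lambda>i. L (Ps ! i)"] assms by simp
qed

lemma clearing_exists_cleared:
  assumes "1 \<le> \<kappa>" and close_iff: "\<And>x y. d x y < \<sigma> \<longleftrightarrow> L x = L y"
    and "\<mu> \<le> length Ps" "finite A" "\<forall>j < \<mu>. L (Ps ! j) \<in> A" "card A * \<kappa> < \<mu>"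
  shows "\<exists>j < \<mu>. \<not> clearing d \<sigma> \<kappa> f Ps j > 0"
proof (rule ccontr)
  assume "\<not> ?thesis"
  then have "{..<\<mu>} \<subseteq> (\<Union>l \<in> A. {j. j < length Ps \<and> L (Ps ! j) = l \<and> clearing d \<sigma> \<kappa> f Ps j > 0})"
    using assms(3,5) by fastforce
  then have "\<mu> \<le> card (\<Union>l \<in> A. {j. j < length Ps \<and> L (Ps ! j) = l \<and> clearing d \<sigma> \<kappa> f Ps j > 0})"
    using card_mono[of _ "{..<\<mu>}"] assms(4) by fastforce
  also have "\<dots> \<le> (\<Sum>l \<in> A. card {j. j < length Ps \<and> L (Ps ! j) = l \<and> clearing d \<sigma> \<kappa> f Ps j > 0})"
    by (rule card_UN_le[OF assms(4)])
  also have "\<dots> \<le> (\<Sum>l \<in> A. \<kappa>)"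
    by (intro sum_mono clearing_niche_card[OF assms(1)] close_iff)
  also have "\<dots> = card A * \<kappa>" by simp
  finally show False using assms(6) by simp
qed

lemma pheno_dist_less_1_iff: "pheno_dist x y < 1 \<longleftrightarrow> unitation x = unitation y"
  unfolding pheno_dist_def by auto

section \<open>Replacement under phenotypic clearing\<close>

definition replace_worst :: "(bool list \<Rightarrow> bool list \<Rightarrow> nat) \<Rightarrow> nat \<Rightarrow> nat \<Rightarrow> nat
    \<Rightarrow> (bool list \<Rightarrow> real) \<Rightarrow> bool list list \<Rightarrow> bool list \<Rightarrow> bool list list pmf" where
  "replace_worst d \<sigma> \<kappa> \<mu> f P y =
     (let Ps = P @ [y];
          c = clearing d \<sigma> \<kappa> f Ps;
          m = Min (c ` {..<\<mu>})
      in map_pmf (\<lambda>z. if c z \<le> c \<mu> then take z Ps @ drop (Suc z) Ps else P)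
                 (pmf_of_set {z. z < \<mu> \<and> c z = m}))"

lemma ea_step_eq:
  "ea_step d \<sigma> \<kappa> \<mu> n f P =
     bind_pmf (pmf_of_set {..<\<mu>}) (\<lambda>i. bind_pmf (mutate n (P ! i)) (replace_worst d \<sigma> \<kappa> \<mu> f P))"
  unfolding ea_step_def replace_worst_def ..

lemma set_pmf_replace_worst:
  assumes "\<mu> > 0" "P' \<in> set_pmf (replace_worst d \<sigma> \<kappa> \<mu> f P y)"
  obtains z where "z < \<mu>"
    "clearing d \<sigma> \<kappa> f (P @ [y]) z = Min (clearing d \<sigma> \<kappa> f (P @ [y]) ` {..<\<mu>})"
    "P' = (if clearing d \<sigma> \<kappa> f (P @ [y]) z \<le> clearing d \<sigma> \<kappa> f (P @ [y]) \<mu>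
           then take z (P @ [y]) @ drop (Suc z) (P @ [y]) else P)"
proof -
  let ?Ps = "P @ [y]" and ?c = "clearing d \<sigma> \<kappa> f (P @ [y])"
  let ?Z = "{z. z < \<mu> \<and> ?c z = Min (?c ` {..<\<mu>})}"
  have "Min (?c ` {..<\<mu>}) \<in> ?c ` {..<\<mu>}"
    using assms(1) by (intro Min_in) auto
  then have "set_pmf (pmf_of_set ?Z) = ?Z" by (intro set_pmf_of_set) auto
  then have "P' \<in> (\<lambda>z. if ?c z \<le> ?c \<mu> then take z ?Ps @ drop (Suc z) ?Ps else P) ` ?Z"
    using assms(2) unfolding replace_worst_def Let_def by simp
  then show ?thesis using that by blast
qed

lemma nth_mem_take_drop_Suc:
  assumes "k < length xs" "k \<noteq> z"
  shows "xs ! k \<in> set (take z xs @ drop (Suc z) xs)"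
proof (cases "k < z")
  case True
  then have "take z xs ! k = xs ! k" "k < length (take z xs)" using assms by auto
  then show ?thesis by (metis Un_iff nth_mem set_append)
next
  case False
  then have "drop (Suc z) xs ! (k - Suc z) = xs ! k" "k - Suc z < length (drop (Suc z) xs)"
    using assms by auto
  then show ?thesis by (metis Un_iff nth_mem set_append)
qed

text \<open>Some old individual is cleared, so the worst cleared fitness is 0 and the offspring is
  accepted; the removed individual was cleared, hence its level is shared by a survivor.\<close>
lemma replace_worst_pheno_keeps_levels:
  assumes "1 \<le> \<kappa>" "length P = \<mu>" "finite A" "unitation ` set P \<subseteq> A" "card A * \<kappa> < \<mu>"
    and fpos: "\<forall>x \<in> set (P @ [y]). f x > 0"
    and P': "P' \<in> set_pmf (replace_worst pheno_dist 1 \<kappa> \<mu> f P y)"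
  shows "unitation ` set (P @ [y]) \<subseteq> unitation ` set P'"
proof -
  define Ps where "Ps = P @ [y]"
  define c where "c = clearing pheno_dist 1 \<kappa> f Ps"
  have len: "length Ps = Suc \<mu>" using assms(2) by (simp add: Ps_def)
  have f_nth: "f (Ps ! j) > 0" if "j < Suc \<mu>" for j
    using fpos that len nth_mem[of j Ps] unfolding Ps_def by fastforce
  have cleared: "c j = 0 \<and> (\<exists>i < Suc \<mu>. i \<noteq> j \<and> unitation (Ps ! i) = unitation (Ps ! j))"
    if "j < Suc \<mu>" "\<not> c j > 0" for j
    using clearing_cleared[of pheno_dist 1 \<kappa> f Ps j] f_nth[OF that(1)] that(2) len
    by (auto simp: c_def pheno_dist_def)
  have "\<forall>j < \<mu>. unitation (Ps ! j) \<in> A"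
    using assms(2,4) by (auto simp: Ps_def nth_append)
  then obtain j0 where j0: "j0 < \<mu>" "\<not> c j0 > 0"
    using clearing_exists_cleared[where d=pheno_dist and \<sigma>=1 and L=unitation and f=f and Ps=Ps,
        OF assms(1) pheno_dist_less_1_iff _ assms(3) _ assms(5)] len
    unfolding c_def by auto
  have "\<mu> > 0" using j0 by simp
  from set_pmf_replace_worst[OF this P'] obtain z where z: "z < \<mu>" "c z = Min (c ` {..<\<mu>})"
    and P'_eq: "P' = (if c z \<le> c \<mu> then take z Ps @ drop (Suc z) Ps else P)"
    unfolding c_def Ps_def by blast
  have "c z \<le> c j0" using z(2) j0(1) by simp
  then have cz: "c z = 0" and shared: "\<exists>i < Suc \<mu>. i \<noteq> z \<and> unitation (Ps ! i) = unitation (Ps ! z)"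
    using cleared[of z] j0 z(1) by auto
  have "c \<mu> \<ge> 0" using cleared[of \<mu>] by force
  then have P'_rem: "P' = take z Ps @ drop (Suc z) Ps" using P'_eq cz by simp
  show ?thesis
  proof
    fix l assume "l \<in> unitation ` set (P @ [y])"
    then obtain k where k: "k < Suc \<mu>" "l = unitation (Ps ! k)"
      using len by (auto simp: Ps_def[symmetric] in_set_conv_nth)
    then show "l \<in> unitation ` set P'"
      using shared nth_mem_take_drop_Suc[of _ Ps z] len unfolding P'_rem
      by (cases "k = z") (metis image_eqI)+
  qed
qed

section \<open>Standard bit mutation\<close>

lemma length_mutate: "y \<in> set_pmf (mutate n x) \<Longrightarrow> length y = length x"
  by (induction x arbitrary: y) auto

lemma pmf_mutate_Cons:
  "pmf (mutate n (b # bs)) (c # ys) =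
     (if c \<noteq> b then 1 / real n else 1 - 1 / real n) * pmf (mutate n bs) ys"
proof -
  let ?p = "1 / real n"
  have p: "0 \<le> ?p" "?p \<le> 1" by (auto simp: divide_le_eq)
  have inj: "inj (Cons a)" for a :: bool by (simp add: inj_def)
  have "mutate n (b # bs) = bind_pmf (bernoulli_pmf ?p) (\<lambda>c. map_pmf (Cons (b \<noteq> c)) (mutate n bs))"
    by (simp add: map_pmf_def)
  then have "pmf (mutate n (b # bs)) (c # ys) =
      pmf (map_pmf (Cons (\<not> b)) (mutate n bs)) (c # ys) * ?p
      + pmf (map_pmf (Cons b) (mutate n bs)) (c # ys) * (1 - ?p)"
    by (simp add: pmf_bind integral_bernoulli_pmf[OF p])
  also have "\<dots> = (if c \<noteq> b then ?p else 1 - ?p) * pmf (mutate n bs) ys"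
    by (cases "c = b") (auto simp: pmf_map_inj'[OF inj] pmf_eq_0_set_pmf)
  finally show ?thesis .
qed

lemma pmf_mutate_self: "pmf (mutate n x) x = (1 - 1 / real n) ^ length x"
  by (induction x) (simp_all add: pmf_mutate_Cons del: mutate.simps(2))

lemma pmf_mutate_flip:
  "k < length x \<Longrightarrow> pmf (mutate n x) (x[k := \<not> x ! k]) = 1 / real n * (1 - 1 / real n) ^ (length x - 1)"
proof (induction x arbitrary: k)
  case (Cons b bs)
  then show ?case
    by (cases k) (auto simp: pmf_mutate_Cons pmf_mutate_self power_eq_if simp del: mutate.simps)
qed simp

lemma unitation_eq_card: "unitation x = card {k. k < length x \<and> x ! k}"
  unfolding unitation_def by (simp add: length_filter_conv_card)

lemma card_zero_positions: "card {k. k < length x \<and> \<not> x ! k} = length x - unitation x"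
proof -
  have "{k. k < length x \<and> \<not> x ! k} = {..<length x} - {k. k < length x \<and> x ! k}" by auto
  moreover have "{k. k < length x \<and> x ! k} \<subseteq> {..<length x}" by auto
  ultimately show ?thesis by (simp add: card_Diff_subset unitation_eq_card)
qed

lemma unitation_le_length: "unitation x \<le> length x"
  unfolding unitation_def by (rule length_filter_le)

lemma unitation_flip:
  assumes "k < length x"
  shows "unitation (x[k := \<not> x ! k]) = (if x ! k then unitation x - 1 else unitation x + 1)"
proof -
  have "{i. i < length x \<and> x[k := \<not> x ! k] ! i} =
      (if x ! k then {i. i < length x \<and> x ! i} - {k} else insert k {i. i < length x \<and> x ! i})"
    using assms by (auto simp: nth_list_update)
  then show ?thesis using assms by (simp add: unitation_eq_card)
qed

lemma prob_mutate_single_flips: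
  assumes "G \<subseteq> {..<length x}"
  shows "measure_pmf.prob (mutate n x) ((\<lambda>k. x[k := \<not> x ! k]) ` G)
           = card G * (1 / real n * (1 - 1 / real n) ^ (length x - 1))"
proof -
  have "inj_on (\<lambda>k. x[k := \<not> x ! k]) G"
  proof
    fix k k' assume "k \<in> G" "k' \<in> G" "x[k := \<not> x ! k] = x[k' := \<not> x ! k']"
    then show "k = k'" using assms by (metis lessThan_iff nth_list_update_eq nth_list_update_neq subsetD)
  qed
  moreover have "finite G" using assms finite_subset by blast
  ultimately show ?thesis
    using assms by (simp add: measure_measure_pmf_finite sum.reindex pmf_mutate_flip subset_iff)
qed

lemma exp_minus_one_le_power:
  assumes "n \<ge> 2"
  shows "exp (-1) \<le> (1 - 1 / real n) ^ (n - 1)"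
proof -
  have "(1 + 1 / real (n - 1)) ^ (n - 1) \<le> exp 1"
    by (rule exp_ge_one_plus_x_over_n_power_n[of "n - 1" 1]) (use assms in auto)
  moreover have "1 - 1 / real n = inverse (1 + 1 / real (n - 1))"
    using assms by (simp add: of_nat_diff field_simps)
  moreover have "0 < (1 + 1 / real (n - 1)) ^ (n - 1)" by (simp add: add_pos_nonneg)
  ultimately show ?thesis
    by (simp add: power_inverse exp_minus le_imp_inverse_le)
qed

definition level_gap :: "nat \<Rightarrow> bool list \<Rightarrow> nat" where
  "level_gap k x = nat \<bar>int (unitation x) - int k\<bar>"

text \<open>At least level_gap k x bits move x towards level k when flipped, and each is flipped
  alone with probability (1/n)(1 - 1/n)^(n-1) \<ge> 1/(e n).\<close>
lemma prob_mutate_decreases_gap: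
  assumes "n \<ge> 2" "length x = n" "k \<le> n" "unitation x \<noteq> k"
  shows "real (level_gap k x) / (exp 1 * real n)
           \<le> measure_pmf.prob (mutate n x) {y. level_gap k y < level_gap k x}"
proof -
  let ?p = "1 / real n * (1 - 1 / real n) ^ (n - 1)"
  define G where "G = {i. i < n \<and> x ! i = (k < unitation x)}"
  have "level_gap k x \<le> card G"
    using card_zero_positions[of x] unitation_eq_card[of x] assms(2,3) unitation_le_length[of x]
    by (cases "k < unitation x") (auto simp: G_def level_gap_def)
  moreover have "exp (-1) / real n \<le> ?p"
    using exp_minus_one_le_power[OF assms(1)] by (simp add: divide_right_mono)
  ultimately have "real (level_gap k x) * (exp (-1) / real n) \<le> card G * ?p"
    by (intro mult_mono) auto
  also have "\<dots> = measure_pmf.prob (mutate n x) ((\<lambda>i. x[i := \<not> x ! i]) ` G)"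
    using prob_mutate_single_flips[of G x n] assms(2) by (simp add: G_def subset_iff)
  also have "\<dots> \<le> measure_pmf.prob (mutate n x) {y. level_gap k y < level_gap k x}"
  proof (intro measure_pmf.finite_measure_mono image_subsetI CollectI)
    fix i assume i: "i \<in> G"
    then have "unitation (x[i := \<not> x ! i]) = (if x ! i then unitation x - 1 else unitation x + 1)"
      using unitation_flip[of i x] assms(2) by (simp add: G_def)
    then show "level_gap k (x[i := \<not> x ! i]) < level_gap k x"
      using i assms(4) unfolding level_gap_def G_def by auto
  qed simp
  finally show ?thesis by (simp add: exp_minus field_simps)
qed

section \<open>Populations and additive drift\<close>

definition pop_gap :: "nat \<Rightarrow> bool list list \<Rightarrow> nat" where
  "pop_gap k P = Min (level_gap k ` set P)"

lemma pop_gap_le: "unitation x \<in> unitation ` set P \<Longrightarrow> pop_gap k P \<le> level_gap k x"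
  unfolding pop_gap_def level_gap_def by (auto intro!: Min_le)

definition is_population :: "nat \<Rightarrow> nat \<Rightarrow> bool list list \<Rightarrow> bool" where
  "is_population \<mu> n P \<longleftrightarrow> length P = \<mu> \<and> (\<forall>x \<in> set P. length x = n)"

lemma is_population_ea_init:
  assumes "P \<in> set_pmf (ea_init \<mu> n)"
  shows "is_population \<mu> n P"
proof -
  let ?S = "{P :: bool list list. length P = \<mu> \<and> (\<forall>x \<in> set P. length x = n)}"
  have "?S \<subseteq> {P. set P \<subseteq> {x. length x = n} \<and> length P = \<mu>}" by auto
  moreover have "finite {x :: bool list. length x = n}"
    using finite_lists_length_eq[of "UNIV :: bool set" n] by simp
  then have "finite {P. set P \<subseteq> {x :: bool list. length x = n} \<and> length P = \<mu>}"
    by (rule finite_lists_length_eq)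
  ultimately have "finite ?S" by (rule finite_subset)
  moreover have "replicate \<mu> (replicate n False) \<in> ?S" by auto
  then have "?S \<noteq> {}" by blast
  ultimately show ?thesis
    using assms unfolding ea_init_def is_population_def by (subst (asm) set_pmf_of_set) auto
qed

lemma is_population_ea_step:
  assumes "is_population \<mu> n P" "\<mu> > 0" "P' \<in> set_pmf (ea_step d \<sigma> \<kappa> \<mu> n f P)"
  shows "is_population \<mu> n P'"
proof -
  have "set_pmf (pmf_of_set {..<\<mu>}) = {..<\<mu>}" using assms(2) by (intro set_pmf_of_set) auto
  then obtain i y where i: "i < \<mu>" and y: "y \<in> set_pmf (mutate n (P ! i))"
    and P': "P' \<in> set_pmf (replace_worst d \<sigma> \<kappa> \<mu> f P y)"
    using assms(3) unfolding ea_step_eq by auto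
  have "length y = n" using length_mutate[OF y] i assms(1) by (auto simp: is_population_def)
  then have "is_population (Suc \<mu>) n (P @ [y])" using assms(1) by (simp add: is_population_def)
  moreover obtain z where "z < \<mu>"
    "P' = (if clearing d \<sigma> \<kappa> f (P @ [y]) z \<le> clearing d \<sigma> \<kappa> f (P @ [y]) \<mu>
           then take z (P @ [y]) @ drop (Suc z) (P @ [y]) else P)"
    using set_pmf_replace_worst[OF assms(2) P'] by blast
  ultimately show ?thesis using assms(1)
    unfolding is_population_def by (auto split: if_splits dest: in_set_takeD in_set_dropD)
qed

lemma is_population_ea_path:
  assumes "\<mu> > 0" "ps \<in> set_pmf (ea_path d \<sigma> \<kappa> \<mu> n f t)"
  shows "ps \<noteq> [] \<and> is_population \<mu> n (last ps)"
  using assms(2)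
proof (induction t arbitrary: ps)
  case 0
  then show ?case using is_population_ea_init by auto
next
  case (Suc t)
  then show ?case using is_population_ea_step[OF _ assms(1)] by fastforce
qed

lemma nn_integral_pmf_le_const:
  "(\<And>x. x \<in> set_pmf M \<Longrightarrow> f x \<le> b) \<Longrightarrow> (\<integral>\<^sup>+x. f x \<partial>measure_pmf M) \<le> b"
  using nn_integral_mono_AE[of f "\<lambda>_. b" M]
  by (simp add: AE_measure_pmf_iff measure_pmf.emeasure_space_1)

lemma nn_integral_pmf_plus_emeasure_le:
  assumes "\<And>x. x \<in> set_pmf M \<Longrightarrow> f x + a * indicator A x \<le> b"
  shows "(\<integral>\<^sup>+x. f x \<partial>measure_pmf M) + a * emeasure (measure_pmf M) A \<le> b"
proof -
  have "(\<integral>\<^sup>+x. f x \<partial>measure_pmf M) + a * emeasure (measure_pmf M) A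
      = (\<integral>\<^sup>+x. f x + a * indicator A x \<partial>measure_pmf M)"
    by (simp add: nn_integral_add nn_integral_cmult)
  also have "\<dots> \<le> b" by (rule nn_integral_pmf_le_const) (rule assms)
  finally show ?thesis .
qed

lemma suminf_le_telescoping:
  fixes a V :: "nat \<Rightarrow> ennreal"
  assumes "\<And>t. V (Suc t) + a t \<le> V t" "V 0 \<le> b"
  shows "(\<Sum>t. a t) \<le> b"
proof (rule suminf_le_const)
  fix N
  have "(\<Sum>t<N. a t) + V N \<le> V 0"
  proof (induction N)
    case (Suc N)
    have "(\<Sum>t<Suc N. a t) + V (Suc N) = (\<Sum>t<N. a t) + (V (Suc N) + a N)"
      by (simp add: ac_simps)
    also have "\<dots> \<le> (\<Sum>t<N. a t) + V N" by (intro add_left_mono assms(1))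
    finally show ?case using Suc.IH by (rule order_trans)
  qed simp
  moreover have "(\<Sum>t<N. a t) \<le> (\<Sum>t<N. a t) + V N" by simp
  ultimately show "(\<Sum>t<N. a t) \<le> b"
    using assms(2) by (blast intro: order_trans)
qed simp

text \<open>V t, the expected potential of the runs that stayed in S up to time t, satisfies
  V (t + 1) + Pr[the run stays in S up to t] \<le> V t; summing telescopes.\<close>
lemma ea_additive_drift:
  fixes \<Phi> :: "bool list list \<Rightarrow> ennreal"
  assumes "\<mu> > 0"
    and drift: "\<And>P. is_population \<mu> n P \<Longrightarrow> P \<in> S \<Longrightarrow>
                  (\<integral>\<^sup>+P'. \<Phi> P' \<partial>measure_pmf (ea_step d \<sigma> \<kappa> \<mu> n f P)) + 1 \<le> \<Phi> P"
    and bound: "\<And>P. is_population \<mu> n P \<Longrightarrow> \<Phi> P \<le> b"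
  shows "(\<Sum>t. emeasure (measure_pmf (ea_path d \<sigma> \<kappa> \<mu> n f t)) {ps. set ps \<subseteq> S}) \<le> b"
proof (rule suminf_le_telescoping)
  let ?Q = "{ps. set ps \<subseteq> S}" and ?M = "\<lambda>t. measure_pmf (ea_path d \<sigma> \<kappa> \<mu> n f t)"
  define V where "V t = (\<integral>\<^sup>+ps. \<Phi> (last ps) * indicator ?Q ps \<partial>?M t)" for t
  show "V 0 \<le> b"
    unfolding V_def
  proof (rule nn_integral_pmf_le_const)
    fix ps assume "ps \<in> set_pmf (ea_path d \<sigma> \<kappa> \<mu> n f 0)"
    then have "\<Phi> (last ps) \<le> b" using bound is_population_ea_path[OF assms(1)] by blast
    then show "\<Phi> (last ps) * indicator ?Q ps \<le> b" by (simp split: split_indicator)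
  qed
  fix t
  have "V (Suc t) + emeasure (?M t) ?Q =
      (\<integral>\<^sup>+ps. (\<integral>\<^sup>+P. \<Phi> P * indicator ?Q (ps @ [P]) \<partial>measure_pmf (ea_step d \<sigma> \<kappa> \<mu> n f (last ps)))
        + indicator ?Q ps \<partial>?M t)"
    unfolding V_def by (simp add: nn_integral_add)
  also have "\<dots> \<le> V t"
    unfolding V_def
  proof (intro nn_integral_mono_AE, unfold AE_measure_pmf_iff, intro ballI)
    fix ps assume ps: "ps \<in> set_pmf (ea_path d \<sigma> \<kappa> \<mu> n f t)"
    show "(\<integral>\<^sup>+P. \<Phi> P * indicator ?Q (ps @ [P]) \<partial>measure_pmf (ea_step d \<sigma> \<kappa> \<mu> n f (last ps)))
        + indicator ?Q ps \<le> \<Phi> (last ps) * indicator ?Q ps"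
    proof (cases "ps \<in> ?Q")
      case True
      have "(\<integral>\<^sup>+P. \<Phi> P * indicator ?Q (ps @ [P]) \<partial>measure_pmf (ea_step d \<sigma> \<kappa> \<mu> n f (last ps)))
          \<le> (\<integral>\<^sup>+P. \<Phi> P \<partial>measure_pmf (ea_step d \<sigma> \<kappa> \<mu> n f (last ps)))"
        by (intro nn_integral_mono) (simp split: split_indicator)
      moreover have "last ps \<in> S" using True is_population_ea_path[OF assms(1) ps] by auto
      then have "(\<integral>\<^sup>+P. \<Phi> P \<partial>measure_pmf (ea_step d \<sigma> \<kappa> \<mu> n f (last ps))) + 1 \<le> \<Phi> (last ps)"
        using drift is_population_ea_path[OF assms(1) ps] by blast
      ultimately show ?thesis
        using True by (simp add: order_trans[OF add_right_mono])
    qed simp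
  qed
  finally show "V (Suc t) + emeasure (?M t) ?Q \<le> V t" .
qed

section \<open>Drift of the gap potential\<close>

text \<open>Fitness-level potential: from gap i the gap shrinks within e n \<mu> / i expected generations.\<close>
definition gap_potential :: "nat \<Rightarrow> nat \<Rightarrow> nat \<Rightarrow> bool list list \<Rightarrow> ennreal" where
  "gap_potential n \<mu> k P = ennreal (exp 1 * real n * real \<mu> * harm (pop_gap k P))"

context
  fixes n \<kappa> \<mu> ks :: nat and f :: "bool list \<Rightarrow> real" and P :: "bool list list"
  assumes n: "n \<ge> 2" and \<kappa>: "1 \<le> \<kappa>" and \<mu>: "(n + 1) * \<kappa> \<le> \<mu>" and ks: "ks \<le> n"
    and f_pos: "\<And>x. length x = n \<Longrightarrow> f x > 0"
    and P: "is_population \<mu> n P" and not_opt: "ks \<notin> unitation ` set P"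
begin

lemma pop_gap_attained: "\<exists>i < \<mu>. level_gap ks (P ! i) = pop_gap ks P"
proof -
  have "\<mu> > 0" using \<mu> \<kappa> by (simp add: less_le_trans)
  then have "pop_gap ks P \<in> level_gap ks ` set P"
    using P unfolding pop_gap_def is_population_def by (intro Min_in) auto
  then show ?thesis using P by (auto simp: is_population_def in_set_conv_nth)
qed

lemma pop_gap_pos: "pop_gap ks P \<ge> 1"
proof -
  obtain i where "i < \<mu>" "level_gap ks (P ! i) = pop_gap ks P" using pop_gap_attained by blast
  moreover have "unitation (P ! i) \<noteq> ks"
    using \<open>i < \<mu>\<close> P not_opt by (auto simp: is_population_def)
  ultimately show ?thesis by (auto simp: level_gap_def)
qed

lemma replace_worst_gap_le:
  assumes "i < \<mu>" "y \<in> set_pmf (mutate n (P ! i))"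
    and P': "P' \<in> set_pmf (replace_worst pheno_dist 1 \<kappa> \<mu> f P y)"
  shows "pop_gap ks P' \<le> min (pop_gap ks P) (level_gap ks y)"
proof -
  have len: "length P = \<mu>" "\<forall>x \<in> set (P @ [y]). length x = n"
    using P length_mutate[OF assms(2)] assms(1) by (auto simp: is_population_def)
  have "unitation ` set P \<subseteq> {0..n} - {ks}"
    using len(2) not_opt unitation_le_length by fastforce
  moreover have "card ({0..n} - {ks}) * \<kappa> < \<mu>" using ks \<mu> \<kappa> by simp
  ultimately have levels: "unitation ` set (P @ [y]) \<subseteq> unitation ` set P'"
    using replace_worst_pheno_keeps_levels[OF \<kappa> len(1) _ _ _ _ P'] len(2) f_pos by blast
  obtain i0 where "i0 < \<mu>" "level_gap ks (P ! i0) = pop_gap ks P"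
    using pop_gap_attained by blast
  moreover have "unitation (P ! i0) \<in> unitation ` set P'"
    using levels \<open>i0 < \<mu>\<close> len(1) by auto
  ultimately have "pop_gap ks P' \<le> pop_gap ks P" using pop_gap_le[of "P ! i0" P' ks] by simp
  moreover have "pop_gap ks P' \<le> level_gap ks y" using levels pop_gap_le[of y P'] by auto
  ultimately show ?thesis by simp
qed

lemma selected_parent_drift:
  assumes "i < \<mu>"
  shows "(\<integral>\<^sup>+y. (\<integral>\<^sup>+P'. gap_potential n \<mu> ks P' \<partial>measure_pmf (replace_worst pheno_dist 1 \<kappa> \<mu> f P y))
            \<partial>measure_pmf (mutate n (P ! i)))
         + (if level_gap ks (P ! i) = pop_gap ks P then ennreal (real \<mu>) else 0)
         \<le> gap_potential n \<mu> ks P"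
proof -
  define g where "g = pop_gap ks P"
  define c where "c = exp 1 * real n * real \<mu>"
  define A where "A = {y. level_gap ks y < g}"
  let ?M = "measure_pmf (mutate n (P ! i))"
  have g: "g \<ge> 1" using pop_gap_pos by (simp add: g_def)
  have c: "c \<ge> 0" by (simp add: c_def)
  have offspring: "(\<integral>\<^sup>+y. (\<integral>\<^sup>+P'. gap_potential n \<mu> ks P' \<partial>measure_pmf (replace_worst pheno_dist 1 \<kappa> \<mu> f P y)) \<partial>?M)
      \<le> (\<integral>\<^sup>+y. ennreal (c * harm (min g (level_gap ks y))) \<partial>?M)"
    using replace_worst_gap_le[OF assms] c
    by (intro nn_integral_mono_AE) (auto simp: AE_measure_pmf_iff gap_potential_def c_def g_def
        intro!: nn_integral_pmf_le_const ennreal_leI mult_left_mono harm_mono)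
  have gain: "(\<integral>\<^sup>+y. ennreal (c * harm (min g (level_gap ks y))) \<partial>?M)
      + ennreal (c / g) * emeasure ?M A \<le> ennreal (c * harm g)"
  proof (rule nn_integral_pmf_plus_emeasure_le)
    fix y
    have "harm g = harm (g - 1) + 1 / real g" using g harm_Suc[of "g - 1"] by (simp add: field_simps)
    moreover have "harm (min g (level_gap ks y)) \<le> (harm (g - 1) :: real)" if "y \<in> A"
      using that by (intro harm_mono) (auto simp: A_def)
    ultimately have "c * harm (min g (level_gap ks y)) + c / g * indicator A y \<le> c * harm g"
      using c by (auto simp: A_def algebra_simps split: split_indicator intro: mult_left_mono)
    moreover have "ennreal (c * harm (min g (level_gap ks y))) + ennreal (c / g) * indicator A y
        = ennreal (c * harm (min g (level_gap ks y)) + c / g * indicator A y)"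
      using c by (simp add: ennreal_plus harm_nonneg split: split_indicator)
    ultimately show "ennreal (c * harm (min g (level_gap ks y))) + ennreal (c / g) * indicator A y
        \<le> ennreal (c * harm g)"
      by (simp add: ennreal_leI)
  qed
  have improve: "(if level_gap ks (P ! i) = g then ennreal (real \<mu>) else 0) \<le> ennreal (c / g) * emeasure ?M A"
  proof (cases "level_gap ks (P ! i) = g")
    case True
    have "length (P ! i) = n" "unitation (P ! i) \<noteq> ks"
      using P not_opt assms by (auto simp: is_population_def)
    then have "real g / (exp 1 * real n) \<le> measure_pmf.prob (mutate n (P ! i)) A"
      using prob_mutate_decreases_gap[OF n _ ks, of "P ! i"] True by (simp add: A_def)
    then have "c / g * (real g / (exp 1 * real n)) \<le> c / g * measure_pmf.prob (mutate n (P ! i)) A"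
      using c by (intro mult_left_mono) auto
    moreover have "c / g * (real g / (exp 1 * real n)) = real \<mu>" using g n by (simp add: c_def)
    ultimately show ?thesis
      using True c by (simp add: measure_pmf.emeasure_eq_measure ennreal_mult''[symmetric] ennreal_leI)
  qed simp
  have "gap_potential n \<mu> ks P = ennreal (c * harm g)"
    by (simp add: gap_potential_def c_def g_def)
  then show ?thesis
    unfolding g_def[symmetric] using order_trans[OF add_mono[OF offspring improve] gain] by simp
qed

lemma ea_step_drift:
  "(\<integral>\<^sup>+P'. gap_potential n \<mu> ks P' \<partial>measure_pmf (ea_step pheno_dist 1 \<kappa> \<mu> n f P)) + 1
     \<le> gap_potential n \<mu> ks P"
proof -
  obtain i0 where i0: "i0 < \<mu>" "level_gap ks (P ! i0) = pop_gap ks P"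
    using pop_gap_attained by blast
  let ?U = "pmf_of_set {..<\<mu>}"
  have "set_pmf ?U = {..<\<mu>}" using i0(1) by (intro set_pmf_of_set) auto
  then have "(\<integral>\<^sup>+i. (\<integral>\<^sup>+y. (\<integral>\<^sup>+P'. gap_potential n \<mu> ks P'
                  \<partial>measure_pmf (replace_worst pheno_dist 1 \<kappa> \<mu> f P y)) \<partial>measure_pmf (mutate n (P ! i)))
              \<partial>measure_pmf ?U)
        + ennreal (real \<mu>) * emeasure (measure_pmf ?U) {i0} \<le> gap_potential n \<mu> ks P"
    using selected_parent_drift i0(2)
    by (intro nn_integral_pmf_plus_emeasure_le) (force split: split_indicator intro: order_trans[rotated])
  moreover have "measure_pmf.prob ?U {i0} = 1 / real \<mu>"
    using i0(1) by (subst measure_pmf_of_set) auto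
  then have "ennreal (real \<mu>) * emeasure (measure_pmf ?U) {i0} = 1"
    using i0(1) by (simp add: measure_pmf.emeasure_eq_measure ennreal_mult''[symmetric])
  ultimately show ?thesis by (simp add: ea_step_eq nn_integral_bind_pmf)
qed

end

lemma expected_opt_time_le_harm:
  fixes u :: "nat \<Rightarrow> real"
  assumes "n \<ge> 2" "1 \<le> \<kappa>" "(n + 1) * \<kappa> \<le> \<mu>" "\<forall>k \<le> n. u k > 0"
  shows "expected_opt_time pheno_dist 1 \<kappa> \<mu> n u \<le> ennreal (exp 1 * real n * real \<mu> * harm n)"
proof -
  have "Max (u ` {0..n}) \<in> u ` {0..n}" by (intro Max_in) auto
  then obtain ks where ks: "ks \<le> n" "u ks = Max (u ` {0..n})"
    by (metis atLeastAtMost_iff imageE)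
  define S where "S = {P. \<forall>x \<in> set P. \<not> optimal n u x}"
  have "\<mu> > 0" using assms(2,3) by (simp add: less_le_trans)
  have not_opt: "ks \<notin> unitation ` set P" if "P \<in> S" for P
    using that ks by (auto simp: S_def optimal_def)
  have f_pos: "u (unitation x) > 0" if "length x = n" for x
    using assms(4) unitation_le_length[of x] that by simp
  have bound: "gap_potential n \<mu> ks P \<le> ennreal (exp 1 * real n * real \<mu> * harm n)"
    if "is_population \<mu> n P" for P
  proof -
    have "P \<noteq> []" using that \<open>\<mu> > 0\<close> by (auto simp: is_population_def)
    then obtain x where "x \<in> set P" using list.set_sel(1) by blast
    then have "pop_gap ks P \<le> n"
      using pop_gap_le[of x P ks] that ks unitation_le_length[of x]
      by (force simp: level_gap_def is_population_def)
    then show ?thesis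
      unfolding gap_potential_def by (intro ennreal_leI mult_left_mono harm_mono) auto
  qed
  have "expected_opt_time pheno_dist 1 \<kappa> \<mu> n u
      = (\<Sum>t. emeasure (measure_pmf (ea_path pheno_dist 1 \<kappa> \<mu> n (\<lambda>x. u (unitation x)) t)) {ps. set ps \<subseteq> S})"
    unfolding expected_opt_time_def S_def by (simp add: measure_pmf.emeasure_eq_measure subset_eq)
  also have "\<dots> \<le> ennreal (exp 1 * real n * real \<mu> * harm n)"
    using ea_step_drift[OF assms(1-3) ks(1) f_pos _ not_opt] bound
    by (intro ea_additive_drift[OF \<open>\<mu> > 0\<close>])
  finally show ?thesis .
qed

lemma harm_le_3_ln:
  assumes "n \<ge> 2"
  shows "harm n \<le> 3 * ln (real n)"
proof -
  have "harm n - ln (real n) \<le> harm 1 - ln 1"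
    using euler_mascheroni_sequence_decreasing[of 1 n] assms by simp
  moreover have "ln 2 \<le> ln (real n)" using assms by simp
  ultimately show ?thesis using ln2_ge_two_thirds by (simp add: harm_def)
qed

theorem theorem1:
  shows "\<exists>C>0. \<forall>(n::nat) (\<kappa>::nat) (\<mu>::nat) (u::nat \<Rightarrow> real).
           n \<ge> 2 \<longrightarrow> \<kappa> \<ge> 1 \<longrightarrow> \<mu> \<ge> (n + 1) * \<kappa> \<longrightarrow> (\<forall>k\<le>n. u k > 0) \<longrightarrow>
           expected_opt_time pheno_dist 1 \<kappa> \<mu> n u
             \<le> ennreal (C * real \<mu> * real n * ln (real n))"
proof (intro exI[of _ "3 * exp 1"] conjI allI impI)
  fix n \<kappa> \<mu> :: nat and u :: "nat \<Rightarrow> real"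
  assume n: "n \<ge> 2" and "\<kappa> \<ge> 1" "\<mu> \<ge> (n + 1) * \<kappa>" "\<forall>k\<le>n. u k > 0"
  then have bound: "expected_opt_time pheno_dist 1 \<kappa> \<mu> n u \<le> ennreal (exp 1 * real n * real \<mu> * harm n)"
    by (intro expected_opt_time_le_harm)
  have "exp 1 * real n * real \<mu> * harm n \<le> exp 1 * real n * real \<mu> * (3 * ln (real n))"
    using harm_le_3_ln[OF n] by (intro mult_left_mono) auto
  also have "\<dots> = 3 * exp 1 * real \<mu> * real n * ln (real n)" by simp
  finally show "expected_opt_time pheno_dist 1 \<kappa> \<mu> n u
      \<le> ennreal (3 * exp 1 * real \<mu> * real n * ln (real n))"
    by (rule order_trans[OF bound ennreal_leI])
qed simp

end
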